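(* Assume $c_0:\mathbb R^d\times\mathbb U\to\mathbb R$ is nonnegative, bounded and continuous and $\mathbb U$ is compact. Then the function $$c(\pi,Q)=\sum_{i=1}^M\inf_{u\in\mathbb U}\int_{Q^{-1}(i)}c_0(x,u)\,\pi(dx)$$ is continuous on $\mathcal S\times\mathcal Q_c$.
   Context: Fix constants $C,C_1>0$. $\mathcal S$ is the set of probability measures on $\mathbb R^d$ admitting a density bounded by $C$ and $C_1$-Lipschitz, with the weak topology (equivalently total variation on $\mathcal S$). $\mathcal M=\{1,\dots,M\}$; an $M$-cell quantizer is a Borel map $Q:\mathbb R^d\to\mathcal M$; $\mathcal Q_c$ is the set of quantizers all of whose cells $Q^{-1}(i)$ are convex (empty set convex). For $P\in\mathcal P(\mathbb R^d)$, $PQ(A\times\{i\})=P(A\cap Q^{-1}(i))$. Topology on $\mathcal Q_c$: fix $P$ with strictly positive density, identify $Q,Q'$ when $PQ=PQ'$, and $Q_n\to Q$ iff $PQ_n\to PQ$ weakly (independent of the choice of $P$). $\mathbb U$ is the reconstruction alphabet (a Borel subset of some Euclidean space). *)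

theory Defs
  imports "HOL-Probability.Probability"
begin

definition weak_conv_seq :: "(nat \<Rightarrow> 'a::topological_space measure) \<Rightarrow> 'a measure \<Rightarrow> bool" where
  "weak_conv_seq \<mu>s \<mu> \<longleftrightarrow>
     (\<forall>g::'a \<Rightarrow> real. continuous_on UNIV g \<and> bounded (range g) \<longrightarrow>
        (\<lambda>n. \<integral>x. g x \<partial>(\<mu>s n)) \<longlonglongrightarrow> (\<integral>x. g x \<partial>\<mu>))"

definition S_class :: "real \<Rightarrow> real \<Rightarrow> 'a::euclidean_space measure set" where
  "S_class C C1 = {\<pi>. prob_space \<pi> \<and>
     (\<exists>f::'a \<Rightarrow> real. f \<in> borel_measurable borel \<and> (\<forall>x. 0 \<le> f x \<and> f x \<le> C) \<and>
        C1-lipschitz_on UNIV f \<and> \<pi> = density lborel (\<lambda>x. ennreal (f x)))}"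

definition Qc :: "nat \<Rightarrow> ('a::euclidean_space \<Rightarrow> nat) set" where
  "Qc M = {Q. Q \<in> borel_measurable borel \<and> (\<forall>x. Q x \<in> {1..M}) \<and>
              (\<forall>i\<in>{1..M}. convex (Q -` {i}))}"

text \<open>The joint measure PQ on R^d x M, PQ(A x {i}) = P(A \<inter> Q^-1(i)).\<close>
definition joint_meas :: "'a::euclidean_space measure \<Rightarrow> ('a \<Rightarrow> nat) \<Rightarrow> ('a \<times> nat) measure" where
  "joint_meas P Q = distr P borel (\<lambda>x. (x, Q x))"

definition cost :: "('a::euclidean_space \<Rightarrow> 'b \<Rightarrow> real) \<Rightarrow> 'b set \<Rightarrow> nat
                    \<Rightarrow> 'a measure \<Rightarrow> ('a \<Rightarrow> nat) \<Rightarrow> real" where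
  "cost c0 U M \<pi> Q = (\<Sum>i=1..M. INF u\<in>U. (LINT x:(Q -` {i})|\<pi>. c0 x u))"

end

theory Submission
  imports Defs
begin

(*
  The proof reduces everything to two L1 statements on Lebesgue measure:
  (1) Densities.  A weakly convergent sequence of measures with uniformly bounded, uniformly
      Lipschitz densities f_n -> f has f_n -> f pointwise (test against tent functions), hence
      in L1 by Scheffe's lemma, as all f_n and f are probability densities.
  (2) Cells.  Testing the weak convergence P Q_n -> P Q against phi(x) [j = i] shows
      int phi 1_{Q_n^-1(i)} dP -> int phi 1_{Q^-1(i)} dP for continuous phi; by inner/outer
      regularity of P and Urysohn's lemma this extends from phi to indicators of Borel sets,
      so P(Q_n^-1(i) \<triangle> Q^-1(i)) -> 0.  Since P has a strictly positive density, every
      integrable f is absolutely continuous with respect to P, so also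
      int_{Q_n^-1(i) \<triangle> Q^-1(i)} f -> 0.
  Finally a single cell integral int_B c0(.,u) dpi moves by at most
  K (||f_n - f||_1 + int_{B_n \<triangle> B} f) uniformly in u (K a bound of c0); infima over u inherit
  this bound, and summing over the M cells gives the theorem.

  The argument does not need the
  convexity of the cells, the compactness of U or the positivity of C.
*)

lemma integrable_mult_bounded:
  fixes g h :: "'a \<Rightarrow> real"
  assumes g: "integrable M g" and h: "h \<in> borel_measurable M" and h_bdd: "\<And>x. \<bar>h x\<bar> \<le> K"
  shows "integrable M (\<lambda>x. g x * h x)"
proof (rule Bochner_Integration.integrable_bound[where f = "\<lambda>x. K * g x"])
  show "integrable M (\<lambda>x. K * g x)" using g by simp
  show "(\<lambda>x. g x * h x) \<in> borel_measurable M" using g h by measurable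
  have "\<bar>g x\<bar> * \<bar>h x\<bar> \<le> \<bar>K\<bar> * \<bar>g x\<bar>" for x
  proof -
    have "\<bar>h x\<bar> \<le> \<bar>K\<bar>" using h_bdd[of x] by linarith
    then have "\<bar>g x\<bar> * \<bar>h x\<bar> \<le> \<bar>g x\<bar> * \<bar>K\<bar>" by (rule mult_left_mono) simp
    then show ?thesis by (simp add: mult.commute)
  qed
  then show "AE x in M. norm (g x * h x) \<le> norm (K * g x)"
    by (simp add: abs_mult)
qed

lemma prob_density_integral:
  fixes f :: "'a::euclidean_space \<Rightarrow> real"
  assumes prob: "prob_space (density lborel (\<lambda>x. ennreal (f x)))"
    and f_meas: "f \<in> borel_measurable borel" and f_nonneg: "\<And>x. 0 \<le> f x"
  shows "integrable lborel f" "integral\<^sup>L lborel f = 1"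
proof -
  interpret prob_space "density lborel (\<lambda>x. ennreal (f x))" by fact
  have "emeasure (density lborel (\<lambda>x. ennreal (f x))) UNIV = 1"
    using emeasure_space_1 by simp
  then have nn: "(\<integral>\<^sup>+x. ennreal (f x) \<partial>lborel) = 1"
    using f_meas by (simp add: emeasure_density)
  show "integrable lborel f"
    by (rule integrableI_nonneg) (use f_meas f_nonneg nn in auto)
  show "integral\<^sup>L lborel f = 1"
    using integral_eq_nn_integral[of f lborel] f_meas f_nonneg nn by simp
qed

lemma set_integral_density_lborel:
  fixes f c :: "'a::euclidean_space \<Rightarrow> real"
  assumes f_meas: "f \<in> borel_measurable borel" and f_nonneg: "\<And>x. 0 \<le> f x"
    and c_meas: "c \<in> borel_measurable borel" and A: "A \<in> sets borel"
  shows "(LINT x:A|density lborel (\<lambda>x. ennreal (f x)). c x)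
           = (\<integral>x. f x * (indicator A x * c x) \<partial>lborel)"
proof -
  have m: "(\<lambda>x. indicator A x *\<^sub>R c x) \<in> borel_measurable lborel"
    using c_meas A by measurable
  show ?thesis
    unfolding set_lebesgue_integral_def
    using integral_density[OF m, of f] f_meas f_nonneg by simp
qed

lemma measure_density_lborel:
  fixes p :: "'a::euclidean_space \<Rightarrow> real"
  assumes prob: "prob_space (density lborel (\<lambda>x. ennreal (p x)))"
    and p_meas: "p \<in> borel_measurable borel" and p_nonneg: "\<And>x. 0 \<le> p x"
    and A: "A \<in> sets borel"
  shows "measure (density lborel (\<lambda>x. ennreal (p x))) A = (\<integral>x. indicator A x * p x \<partial>lborel)"
proof -
  interpret prob_space "density lborel (\<lambda>x. ennreal (p x))" by fact
  have "measure (density lborel (\<lambda>x. ennreal (p x))) A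
      = integral\<^sup>L (density lborel (\<lambda>x. ennreal (p x))) (indicator A)"
    using A by (simp add: emeasure_eq_measure)
  also have "\<dots> = (\<integral>x. p x *\<^sub>R indicator A x \<partial>lborel)"
    by (rule integral_density) (use p_meas p_nonneg A in auto)
  finally show ?thesis by (simp add: mult.commute)
qed

section \<open>Weak convergence of Lipschitz densities implies L1 convergence\<close>

definition admissible_density :: "real \<Rightarrow> real \<Rightarrow> ('a::euclidean_space \<Rightarrow> real) \<Rightarrow> bool" where
  "admissible_density C C1 f \<longleftrightarrow>
     f \<in> borel_measurable borel \<and> (\<forall>x. 0 \<le> f x \<and> f x \<le> C) \<and> C1-lipschitz_on UNIV f \<and>
     integrable lborel f \<and> integral\<^sup>L lborel f = 1"

lemma S_class_density:
  assumes "\<pi> \<in> S_class C C1"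
  shows "\<exists>f. admissible_density C C1 f \<and> \<pi> = density lborel (\<lambda>x. ennreal (f x))"
  using assms prob_density_integral
  unfolding S_class_def admissible_density_def by blast

lemma S_class_densities:
  assumes "\<forall>n. \<pi>s n \<in> S_class C C1"
  obtains fs where "\<And>n. admissible_density C C1 (fs n)"
    and "\<pi>s = (\<lambda>n. density lborel (\<lambda>x. ennreal (fs n x)))"
proof -
  from assms have "\<forall>n. \<exists>g. admissible_density C C1 g \<and> \<pi>s n = density lborel (\<lambda>x. ennreal (g x))"
    using S_class_density by blast
  then obtain fs where "\<And>n. admissible_density C C1 (fs n)"
    and "\<And>n. \<pi>s n = density lborel (\<lambda>x. ennreal (fs n x))"
    by metis
  then show ?thesis using that by blast
qed

lemma admissible_densityD:
  assumes "admissible_density C C1 f"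
  shows "f \<in> borel_measurable borel" "\<And>x. 0 \<le> f x" "integrable lborel f"
  using assms unfolding admissible_density_def by auto

text \<open>The tent function of height 1 around x with radius r; it serves as a continuous
  approximation of the point evaluation at x.\<close>
definition tent :: "'a::euclidean_space \<Rightarrow> real \<Rightarrow> 'a \<Rightarrow> real" where
  "tent x r y = max 0 (1 - dist y x / r)"

lemma tent_cont: "continuous_on UNIV (tent x r)"
  unfolding tent_def divide_inverse by (intro continuous_intros)

lemma tent_range: "r > 0 \<Longrightarrow> tent x r y \<in> {0..1}"
  by (auto simp: tent_def)

lemma tent_support: "tent x r y \<noteq> 0 \<Longrightarrow> r > 0 \<Longrightarrow> dist y x < r"
  by (auto simp: tent_def max_def field_simps split: if_splits)

lemma tent_integrable:
  assumes r: "r > 0"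
  shows "integrable lborel (tent x r)"
proof (rule Bochner_Integration.integrable_bound)
  show "integrable lborel (indicator (cball x r) :: 'a \<Rightarrow> real)"
    using emeasure_lborel_cball_finite[of x r] by (simp add: integrable_indicator_iff)
  show "tent x r \<in> borel_measurable lborel"
    using borel_measurable_continuous_onI[OF tent_cont] by simp
  have "norm (tent x r y) \<le> norm (indicator (cball x r) y :: real)" for y
    using tent_support[of x r y] tent_range[OF r, of x y] r
    by (cases "tent x r y = 0") (auto simp: indicator_def dist_commute)
  then show "AE y in lborel. norm (tent x r y) \<le> norm (indicator (cball x r) y :: real)"
    by simp
qed

text \<open>The tent dominates half the indicator of the ball of radius r/2, so its integral is positive.\<close>
lemma tent_integral_pos:
  assumes r: "r > 0"
  shows "(\<integral>y. tent x r y \<partial>lborel) > 0"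
proof -
  have half_ball: "integrable lborel (\<lambda>y. (1/2) * (indicator (ball x (r/2)) y :: real))"
    using emeasure_lborel_ball_finite[of x "r/2"] by (simp add: integrable_indicator_iff)
  have "0 < (1/2) * measure lborel (ball x (r/2))"
    using content_ball_gt_0_iff[of x "r/2"] r by simp
  also have "\<dots> = (\<integral>y. (1/2) * (indicator (ball x (r/2)) y :: real) \<partial>lborel)"
    by simp
  also have "\<dots> \<le> (\<integral>y. tent x r y \<partial>lborel)"
    by (rule integral_mono[OF half_ball tent_integrable[OF r]])
       (use tent_range[OF r] r in \<open>auto simp: indicator_def tent_def dist_commute field_simps\<close>)
  finally show ?thesis .
qed

lemma tent_approx:
  fixes h :: "'a::euclidean_space \<Rightarrow> real"
  assumes h_meas: "h \<in> borel_measurable borel" and h_bdd: "\<And>y. \<bar>h y\<bar> \<le> C"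
    and h_lip: "C1-lipschitz_on UNIV h" and r: "r > 0"
  shows "\<bar>(\<integral>y. h y * tent x r y \<partial>lborel) - h x * (\<integral>y. tent x r y \<partial>lborel)\<bar>
           \<le> C1 * r * (\<integral>y. tent x r y \<partial>lborel)"
proof -
  have ti: "integrable lborel (tent x r)" by (rule tent_integrable[OF r])
  have "h \<in> borel_measurable lborel" using h_meas by simp
  then have hti: "integrable lborel (\<lambda>y. h y * tent x r y)"
    using integrable_mult_bounded[OF ti _ h_bdd] by (simp add: mult.commute)
  have pointwise: "\<bar>(h y - h x) * tent x r y\<bar> \<le> C1 * r * tent x r y" for y
  proof (cases "tent x r y = 0")
    case False
    then have "dist y x < r" using tent_support r by blast
    moreover have "0 \<le> C1" using h_lip by (simp add: lipschitz_on_def)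
    moreover have "\<bar>h y - h x\<bar> \<le> C1 * dist y x"
      using lipschitz_onD[OF h_lip, of y x] by (simp add: dist_real_def)
    ultimately have "\<bar>h y - h x\<bar> \<le> C1 * r"
      by (meson less_imp_le mult_left_mono order_trans)
    then show ?thesis
      using tent_range[OF r, of x y] by (simp add: abs_mult mult_right_mono)
  qed simp
  have "(\<integral>y. h y * tent x r y \<partial>lborel) - h x * (\<integral>y. tent x r y \<partial>lborel)
        = (\<integral>y. (h y - h x) * tent x r y \<partial>lborel)"
    using hti ti by (simp add: left_diff_distrib)
  also have "\<bar>\<dots>\<bar> \<le> (\<integral>y. \<bar>(h y - h x) * tent x r y\<bar> \<partial>lborel)"
    by (rule integral_abs_bound)
  also have "\<dots> \<le> (\<integral>y. C1 * r * tent x r y \<partial>lborel)"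
    by (rule integral_mono) (use hti ti pointwise in \<open>auto simp: left_diff_distrib\<close>)
  also have "\<dots> = C1 * r * (\<integral>y. tent x r y \<partial>lborel)" by simp
  finally show ?thesis .
qed

lemma lipschitz_weak_limit_pointwise:
  fixes fs :: "nat \<Rightarrow> 'a::euclidean_space \<Rightarrow> real" and f :: "'a \<Rightarrow> real"
  assumes fs_meas: "\<And>n. fs n \<in> borel_measurable borel" and fs_bdd: "\<And>n y. \<bar>fs n y\<bar> \<le> C"
    and fs_lip: "\<And>n. C1-lipschitz_on UNIV (fs n)"
    and f_meas: "f \<in> borel_measurable borel" and f_bdd: "\<And>y. \<bar>f y\<bar> \<le> C"
    and f_lip: "C1-lipschitz_on UNIV f" and C1: "C1 > 0"
    and weak: "\<And>g. continuous_on UNIV g \<Longrightarrow> bounded (range g) \<Longrightarrow>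
      (\<lambda>n. \<integral>y. fs n y * g y \<partial>lborel) \<longlonglongrightarrow> (\<integral>y. f y * g y \<partial>lborel)"
  shows "(\<lambda>n. fs n x) \<longlonglongrightarrow> f x"
proof (rule LIMSEQ_I)
  fix e :: real assume e: "e > 0"
  define r where "r = e / (4 * C1)"
  have r: "r > 0" using e C1 by (simp add: r_def)
  define I where "I = (\<integral>y. tent x r y \<partial>lborel)"
  have I: "I > 0" unfolding I_def by (rule tent_integral_pos[OF r])
  have "bounded (range (tent x r))"
    unfolding bounded_iff using tent_range[OF r, of x] by (intro exI[of _ 1]) auto
  then have lim: "(\<lambda>n. \<integral>y. fs n y * tent x r y \<partial>lborel) \<longlonglongrightarrow> (\<integral>y. f y * tent x r y \<partial>lborel)"
    by (rule weak[OF tent_cont])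
  have "C1 * r * I > 0" using C1 r I by simp
  from LIMSEQ_D[OF lim this] obtain N where N: "\<And>n. n \<ge> N \<Longrightarrow>
      \<bar>(\<integral>y. fs n y * tent x r y \<partial>lborel) - (\<integral>y. f y * tent x r y \<partial>lborel)\<bar> < C1 * r * I"
    by auto
  show "\<exists>no. \<forall>n\<ge>no. norm (fs n x - f x) < e"
  proof (intro exI allI impI)
    fix n assume n: "n \<ge> N"
    have "\<bar>(\<integral>y. fs n y * tent x r y \<partial>lborel) - fs n x * I\<bar> \<le> C1 * r * I"
      unfolding I_def by (rule tent_approx[OF fs_meas fs_bdd fs_lip r])
    moreover have "\<bar>(\<integral>y. f y * tent x r y \<partial>lborel) - f x * I\<bar> \<le> C1 * r * I"
      unfolding I_def by (rule tent_approx[OF f_meas f_bdd f_lip r])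
    moreover have "\<bar>fs n x - f x\<bar> * I = \<bar>fs n x * I - f x * I\<bar>"
      using I by (metis abs_mult abs_of_pos left_diff_distrib)
    ultimately have "\<bar>fs n x - f x\<bar> * I < (3 * C1 * r) * I"
      using N[OF n] by linarith
    then have "\<bar>fs n x - f x\<bar> < 3 * C1 * r"
      using I by simp
    also have "3 * C1 * r < e" using C1 e by (simp add: r_def field_simps)
    finally show "norm (fs n x - f x) < e" by simp
  qed
qed

lemma scheffe:
  fixes fs :: "nat \<Rightarrow> 'a::euclidean_space \<Rightarrow> real" and f :: "'a \<Rightarrow> real"
  assumes fs_meas: "\<And>n. fs n \<in> borel_measurable borel" and fs_nonneg: "\<And>n y. 0 \<le> fs n y"
    and fs_int: "\<And>n. integrable lborel (fs n)" and fs_one: "\<And>n. integral\<^sup>L lborel (fs n) = 1"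
    and f_meas: "f \<in> borel_measurable borel" and f_nonneg: "\<And>y. 0 \<le> f y"
    and f_int: "integrable lborel f" and f_one: "integral\<^sup>L lborel f = 1"
    and pointwise: "\<And>x. (\<lambda>n. fs n x) \<longlonglongrightarrow> f x"
  shows "(\<lambda>n. \<integral>x. \<bar>fs n x - f x\<bar> \<partial>lborel) \<longlonglongrightarrow> 0"
proof -
  text \<open>The negative part of fs n - f is dominated by f, and has half the L1 norm.\<close>
  define g where "g n x = max (f x - fs n x) 0" for n x
  have g_meas: "g n \<in> borel_measurable lborel" for n
    unfolding g_def using fs_meas[of n] f_meas by measurable
  have g_dom: "\<And>n. AE x in lborel. norm (g n x) \<le> f x"
    using fs_nonneg f_nonneg by (auto simp: g_def)
  have "(\<lambda>n. g n x) \<longlonglongrightarrow> 0" for x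
    using tendsto_max[OF tendsto_diff[OF tendsto_const pointwise] tendsto_const, of "f x" x 0]
    by (simp add: g_def)
  then have g_lim_AE: "AE x in lborel. (\<lambda>n. g n x) \<longlonglongrightarrow> 0" by simp
  note dominated = borel_measurable_const g_meas f_int g_lim_AE g_dom
  have g_int: "integrable lborel (g n)" for n
    by (rule integrable_dominated_convergence2[OF dominated])
  have "(\<lambda>n. \<integral>x. g n x \<partial>lborel) \<longlonglongrightarrow> (\<integral>x. 0 \<partial>(lborel :: 'a measure))"
    by (rule integral_dominated_convergence[OF dominated])
  then have g_lim: "(\<lambda>n. 2 * (\<integral>x. g n x \<partial>lborel)) \<longlonglongrightarrow> 0"
    using tendsto_mult_right_zero by fastforce
  have "(\<integral>x. \<bar>fs n x - f x\<bar> \<partial>lborel) = 2 * (\<integral>x. g n x \<partial>lborel)" for n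
  proof -
    have "(\<integral>x. \<bar>fs n x - f x\<bar> \<partial>lborel) = (\<integral>x. (fs n x - f x) + 2 * g n x \<partial>lborel)"
      by (rule Bochner_Integration.integral_cong) (auto simp: g_def max_def abs_if)
    also have "\<dots> = (integral\<^sup>L lborel (fs n) - integral\<^sup>L lborel f) + 2 * (\<integral>x. g n x \<partial>lborel)"
      using fs_int[of n] f_int g_int[of n] by simp
    finally show ?thesis using fs_one f_one by simp
  qed
  then show ?thesis using g_lim by simp
qed

lemma admissible_densities_weak_conv_L1:
  fixes fs :: "nat \<Rightarrow> 'a::euclidean_space \<Rightarrow> real" and f :: "'a \<Rightarrow> real"
  assumes fs: "\<And>n. admissible_density C C1 (fs n)" and f: "admissible_density C C1 f"
    and C1: "C1 > 0"
    and weak: "weak_conv_seq (\<lambda>n. density lborel (\<lambda>x. ennreal (fs n x)))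
                             (density lborel (\<lambda>x. ennreal (f x)))"
  shows "(\<lambda>n. \<integral>x. \<bar>fs n x - f x\<bar> \<partial>lborel) \<longlonglongrightarrow> 0"
proof -
  have fs_meas: "\<And>n. fs n \<in> borel_measurable borel" and fs_nonneg: "\<And>n x. 0 \<le> fs n x"
    and fs_le: "\<And>n x. fs n x \<le> C" and fs_lip: "\<And>n. C1-lipschitz_on UNIV (fs n)"
    using fs unfolding admissible_density_def by blast+
  have f_meas: "f \<in> borel_measurable borel" and f_nonneg: "\<And>x. 0 \<le> f x"
    and f_le: "\<And>x. f x \<le> C" and f_lip: "C1-lipschitz_on UNIV f"
    using f unfolding admissible_density_def by blast+
  have fs_bdd: "\<And>n x. \<bar>fs n x\<bar> \<le> C" and f_bdd: "\<And>x. \<bar>f x\<bar> \<le> C"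
    using fs_nonneg fs_le f_nonneg f_le by (simp_all add: abs_of_nonneg)
  have weak_lborel: "(\<lambda>n. \<integral>y. fs n y * g y \<partial>lborel) \<longlonglongrightarrow> (\<integral>y. f y * g y \<partial>lborel)"
    if g_cont: "continuous_on UNIV g" and g_bdd: "bounded (range g)" for g :: "'a \<Rightarrow> real"
  proof -
    have g_meas: "g \<in> borel_measurable lborel"
      using borel_measurable_continuous_onI[OF g_cont] by simp
    have dens: "(\<integral>y. g y \<partial>density lborel (\<lambda>x. ennreal (h x))) = (\<integral>y. h y * g y \<partial>lborel)"
      if "h \<in> borel_measurable borel" "\<And>x. 0 \<le> h x" for h
      using integral_density[OF g_meas, of h] that by simp
    have "(\<lambda>n. \<integral>y. g y \<partial>density lborel (\<lambda>x. ennreal (fs n x)))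
            \<longlonglongrightarrow> (\<integral>y. g y \<partial>density lborel (\<lambda>x. ennreal (f x)))"
      using weak g_cont g_bdd unfolding weak_conv_seq_def by blast
    then show ?thesis
      unfolding dens[OF fs_meas fs_nonneg] dens[OF f_meas f_nonneg] .
  qed
  have pointwise: "\<And>x. (\<lambda>n. fs n x) \<longlonglongrightarrow> f x"
    by (rule lipschitz_weak_limit_pointwise[OF fs_meas fs_bdd fs_lip f_meas f_bdd f_lip C1 weak_lborel])
  have fs_int: "\<And>n. integrable lborel (fs n)" and fs_one: "\<And>n. integral\<^sup>L lborel (fs n) = 1"
    and f_int: "integrable lborel f" and f_one: "integral\<^sup>L lborel f = 1"
    using fs f unfolding admissible_density_def by auto
  show ?thesis
    by (rule scheffe[OF fs_meas fs_nonneg fs_int fs_one f_meas f_nonneg f_int f_one pointwise])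
qed

section \<open>Convergence of quantizer cells\<close>

lemma finite_measure_compact_open_approx:
  fixes P :: "'a::euclidean_space measure"
  assumes fin: "finite_measure P" and sets_P: "sets P = sets borel"
    and E: "E \<in> sets borel" and e: "e > 0"
  obtains K G where "compact K" "open G" "K \<subseteq> E" "E \<subseteq> G" "measure P (G - K) < e"
proof -
  interpret finite_measure P by fact
  have fin_space: "emeasure P (space P) \<noteq> \<infinity>" by simp
  obtain K where K: "K \<subseteq> E" "compact K" "measure P E < measure P K + e/2"
  proof (cases "measure P E < e/2")
    case True
    show ?thesis by (rule that[of "{}"]) (use True in auto)
  next
    case False
    have "ennreal (measure P E - e/2) < ennreal (measure P E)"
      using False e by (subst ennreal_less_iff) auto
    also have "\<dots> = emeasure P E" by (simp add: emeasure_eq_measure)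
    also have "\<dots> = (SUP K \<in> {K. K \<subseteq> E \<and> compact K}. emeasure P K)"
      by (rule inner_regular[OF sets_P fin_space E])
    finally obtain K where K: "K \<subseteq> E" "compact K" "ennreal (measure P E - e/2) < emeasure P K"
      by (auto simp: less_SUP_iff)
    then have "measure P E - e/2 < measure P K"
      using False e by (simp add: emeasure_eq_measure ennreal_less_iff)
    then show ?thesis using that K by auto
  qed
  obtain G where G: "E \<subseteq> G" "open G" "measure P G < measure P E + e/2"
  proof -
    have "(INF U \<in> {U. E \<subseteq> U \<and> open U}. emeasure P U) = emeasure P E"
      by (rule outer_regular[OF sets_P fin_space E, symmetric])
    also have "\<dots> < ennreal (measure P E + e/2)"
      using e by (simp add: emeasure_eq_measure ennreal_less_iff)
    finally obtain G where G: "E \<subseteq> G" "open G" "emeasure P G < ennreal (measure P E + e/2)"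
      by (auto simp: INF_less_iff)
    then have "measure P G < measure P E + e/2"
      by (simp add: emeasure_eq_measure ennreal_less_iff)
    then show ?thesis using that G by auto
  qed
  have "K \<in> sets P" "G \<in> sets P"
    using K(2) G(2) sets_P by (simp_all add: compact_imp_closed borel_closed borel_open)
  then have "measure P (G - K) = measure P G - measure P K"
    using K(1) G(1) by (intro finite_measure_Diff) auto
  also have "\<dots> < e" using K G by linarith
  finally show ?thesis using that K G by blast
qed

text \<open>Uniform approximation of a Borel set E by a continuous function with values in [0,1]:
  take an Urysohn function between a compact K and an open G with K \<subseteq> E \<subseteq> G; against any
  measurable S, replacing E by it costs at most P(G - K).\<close>
lemma continuous_approx_borel_set:
  fixes P :: "'a::euclidean_space measure"
  assumes fin: "finite_measure P" and sets_P: "sets P = sets borel"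
    and E: "E \<in> sets borel" and e: "e > 0"
  obtains \<phi> :: "'a \<Rightarrow> real" where "continuous_on UNIV \<phi>" "\<And>x. \<phi> x \<in> {0..1}"
    "\<And>S. S \<in> sets P \<Longrightarrow> \<bar>measure P (E \<inter> S) - (\<integral>x. \<phi> x * indicator S x \<partial>P)\<bar> < e"
proof -
  interpret finite_measure P by fact
  obtain K G where KG: "compact K" "open G" "K \<subseteq> E" "E \<subseteq> G" "measure P (G - K) < e"
    using finite_measure_compact_open_approx[OF fin sets_P E e] by auto
  obtain \<phi> :: "'a \<Rightarrow> real" where \<phi>: "continuous_on UNIV \<phi>" "\<And>x. \<phi> x \<in> closed_segment 0 1"
    "\<And>x. x \<in> -G \<Longrightarrow> \<phi> x = 0" "\<And>x. x \<in> K \<Longrightarrow> \<phi> x = 1"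
    using Urysohn[of "-G" K 0 1] KG by (auto simp: compact_imp_closed open_closed)
  have \<phi>_01: "\<And>x. \<phi> x \<in> {0..1}" using \<phi>(2) by (simp add: closed_segment_eq_real_ivl)
  have \<phi>_meas: "\<phi> \<in> borel_measurable P"
    using borel_measurable_continuous_onI[OF \<phi>(1)] by (simp add: measurable_cong_sets[OF sets_P refl])
  have GK: "G - K \<in> sets P" using KG sets_P by (auto simp: compact_imp_closed borel_closed borel_open)
  have EP: "E \<in> sets P" using E sets_P by simp
  have "\<bar>measure P (E \<inter> S) - (\<integral>x. \<phi> x * indicator S x \<partial>P)\<bar> < e" if S: "S \<in> sets P" for S
  proof -
    have int_E: "integrable P (\<lambda>x. indicator E x * indicator S x :: real)"
      by (rule integrable_const_bound[where B=1]) (use EP S in \<open>auto simp: indicator_def\<close>)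
    have int_\<phi>: "integrable P (\<lambda>x. \<phi> x * indicator S x)"
      by (rule integrable_const_bound[where B=1]) (use \<phi>_meas S \<phi>_01 in \<open>auto simp: indicator_def\<close>)
    have pointwise: "\<bar>indicator E x * indicator S x - \<phi> x * indicator S x\<bar> \<le> (indicator (G - K) x :: real)"
      for x using \<phi>(3)[of x] \<phi>(4)[of x] \<phi>_01[of x] KG(3,4)
      by (cases "x \<in> S"; cases "x \<in> E"; cases "x \<in> G"; cases "x \<in> K") (auto simp: indicator_def)
    have "measure P (E \<inter> S) = (\<integral>x. indicator E x * indicator S x \<partial>P)"
      using EP S by (simp add: indicator_inter_arith[symmetric])
    then have "\<bar>measure P (E \<inter> S) - (\<integral>x. \<phi> x * indicator S x \<partial>P)\<bar>
        = \<bar>\<integral>x. indicator E x * indicator S x - \<phi> x * indicator S x \<partial>P\<bar>"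
      using int_E int_\<phi> by simp
    also have "\<dots> \<le> (\<integral>x. \<bar>indicator E x * indicator S x - \<phi> x * indicator S x\<bar> \<partial>P)"
      by (rule integral_abs_bound)
    also have "\<dots> \<le> (\<integral>x. indicator (G - K) x \<partial>P)"
    proof (rule integral_mono)
      show "integrable P (\<lambda>x. \<bar>indicator E x * indicator S x - \<phi> x * indicator S x\<bar>)"
        using int_E int_\<phi> by auto
      show "integrable P (indicator (G - K) :: 'a \<Rightarrow> real)"
        using GK by (intro integrable_const_bound[where B=1]) auto
    qed (rule pointwise)
    also have "\<dots> = measure P (G - K)" using GK by simp
    finally show ?thesis using KG(5) by linarith
  qed
  then show ?thesis using that \<phi>(1) \<phi>_01 by blast
qed

lemma weak_conv_sets_extends_to_borel:
  fixes P :: "'a::euclidean_space measure"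
  assumes fin: "finite_measure P" and sets_P: "sets P = sets borel"
    and A: "\<And>n. A n \<in> sets borel" and A0: "A0 \<in> sets borel" and E: "E \<in> sets borel"
    and weak: "\<And>\<phi>::'a \<Rightarrow> real. continuous_on UNIV \<phi> \<Longrightarrow> (\<And>x. \<phi> x \<in> {0..1}) \<Longrightarrow>
      (\<lambda>n. \<integral>x. \<phi> x * indicator (A n) x \<partial>P) \<longlonglongrightarrow> (\<integral>x. \<phi> x * indicator A0 x \<partial>P)"
  shows "(\<lambda>n. measure P (E \<inter> A n)) \<longlonglongrightarrow> measure P (E \<inter> A0)"
proof (rule LIMSEQ_I)
  fix r :: real assume r: "r > 0"
  then obtain \<phi> :: "'a \<Rightarrow> real" where \<phi>: "continuous_on UNIV \<phi>" "\<And>x. \<phi> x \<in> {0..1}"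
    and approx: "\<And>S. S \<in> sets P \<Longrightarrow> \<bar>measure P (E \<inter> S) - (\<integral>x. \<phi> x * indicator S x \<partial>P)\<bar> < r/3"
    using continuous_approx_borel_set[OF fin sets_P E, of "r/3"] by auto
  from LIMSEQ_D[OF weak[OF \<phi>], of "r/3"] r obtain N where N: "\<And>n. n \<ge> N \<Longrightarrow>
      \<bar>(\<integral>x. \<phi> x * indicator (A n) x \<partial>P) - (\<integral>x. \<phi> x * indicator A0 x \<partial>P)\<bar> < r/3"
    by auto
  show "\<exists>no. \<forall>n\<ge>no. norm (measure P (E \<inter> A n) - measure P (E \<inter> A0)) < r"
  proof (intro exI allI impI)
    fix n assume n: "n \<ge> N"
    have "A n \<in> sets P" "A0 \<in> sets P" using A A0 sets_P by auto
    then show "norm (measure P (E \<inter> A n) - measure P (E \<inter> A0)) < r"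
      using approx[of "A n"] approx[of A0] N[OF n] unfolding real_norm_def by linarith
  qed
qed

lemma weak_conv_sets_sym_diff:
  fixes P :: "'a::euclidean_space measure"
  assumes fin: "finite_measure P" and sets_P: "sets P = sets borel"
    and A: "\<And>n. A n \<in> sets borel" and A0: "A0 \<in> sets borel"
    and weak: "\<And>\<phi>::'a \<Rightarrow> real. continuous_on UNIV \<phi> \<Longrightarrow> (\<And>x. \<phi> x \<in> {0..1}) \<Longrightarrow>
      (\<lambda>n. \<integral>x. \<phi> x * indicator (A n) x \<partial>P) \<longlonglongrightarrow> (\<integral>x. \<phi> x * indicator A0 x \<partial>P)"
  shows "(\<lambda>n. measure P (A n - A0)) \<longlonglongrightarrow> 0" and "(\<lambda>n. measure P (A0 - A n)) \<longlonglongrightarrow> 0"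
proof -
  interpret finite_measure P by fact
  have lim_inter: "(\<lambda>n. measure P (A0 \<inter> A n)) \<longlonglongrightarrow> measure P A0"
    using weak_conv_sets_extends_to_borel[OF fin sets_P A A0 A0 weak] by simp
  have lim_all: "(\<lambda>n. measure P (A n)) \<longlonglongrightarrow> measure P A0"
    using weak_conv_sets_extends_to_borel[OF fin sets_P A A0 sets.top weak] sets_P by simp
  have AP: "A n \<in> sets P" and A0P: "A0 \<in> sets P" for n using A A0 sets_P by auto
  have "measure P (A n - A0) = measure P (A n) - measure P (A0 \<inter> A n)" for n
    using finite_measure_Diff'[OF AP A0P] by (simp add: Int_commute)
  then show "(\<lambda>n. measure P (A n - A0)) \<longlonglongrightarrow> 0"
    using tendsto_diff[OF lim_all lim_inter] by simp
  have "measure P (A0 - A n) = measure P A0 - measure P (A0 \<inter> A n)" for n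
    using finite_measure_Diff'[OF A0P AP] by simp
  then show "(\<lambda>n. measure P (A0 - A n)) \<longlonglongrightarrow> 0"
    using tendsto_diff[OF tendsto_const[of "measure P A0"] lim_inter] by simp
qed

text \<open>Testing the weak convergence of the joint measures P Q_n against phi(x) [j = i] shows that
  the i-th cells converge against every bounded continuous phi.\<close>
lemma joint_meas_weak_conv_cell:
  fixes P :: "'a::euclidean_space measure" and \<phi> :: "'a \<Rightarrow> real"
  assumes sets_P: "sets P = sets borel"
    and Qs_meas: "\<And>n. Qs n \<in> borel_measurable borel" and Q_meas: "Q \<in> borel_measurable borel"
    and weak: "weak_conv_seq (\<lambda>n. joint_meas P (Qs n)) (joint_meas P Q)"
    and \<phi>_cont: "continuous_on UNIV \<phi>" and \<phi>_bdd: "bounded (range \<phi>)"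
  shows "(\<lambda>n. \<integral>x. \<phi> x * indicator (Qs n -` {i}) x \<partial>P) \<longlonglongrightarrow> (\<integral>x. \<phi> x * indicator (Q -` {i}) x \<partial>P)"
proof -
  define g :: "'a \<times> nat \<Rightarrow> real" where "g z = \<phi> (fst z) * of_bool (snd z = i)" for z
  have g_cont: "continuous_on UNIV g"
  proof -
    have "continuous_on UNIV (\<lambda>z::'a \<times> nat. \<phi> (fst z))"
      by (rule continuous_on_compose2[OF \<phi>_cont continuous_on_fst]) auto
    moreover have "continuous_on UNIV (\<lambda>z::'a \<times> nat. of_bool (snd z = i) :: real)"
      by (rule continuous_on_compose2[OF Topological_Spaces.continuous_on_discrete continuous_on_snd]) auto
    ultimately show ?thesis unfolding g_def by (rule continuous_on_mult)
  qed
  have g_bdd: "bounded (range g)"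
    using \<phi>_bdd unfolding bounded_iff g_def by (force simp: abs_mult)
  have g_meas: "g \<in> borel_measurable borel"
    by (rule borel_measurable_continuous_onI[OF g_cont])
  have as_cell: "(\<integral>z. g z \<partial>joint_meas P R) = (\<integral>x. \<phi> x * indicator (R -` {i}) x \<partial>P)"
    if R: "R \<in> borel_measurable borel" for R :: "'a \<Rightarrow> nat"
  proof -
    have "(\<lambda>x. (x, R x)) \<in> measurable borel (borel \<Otimes>\<^sub>M borel)"
      by (rule measurable_Pair) (use R in auto)
    then have "(\<lambda>x. (x, R x)) \<in> measurable P borel"
      by (simp add: borel_prod measurable_cong_sets[OF sets_P refl])
    then show ?thesis
      unfolding joint_meas_def
      by (subst integral_distr[OF _ g_meas]) (auto simp: g_def indicator_def)
  qed
  have "(\<lambda>n. \<integral>z. g z \<partial>joint_meas P (Qs n)) \<longlonglongrightarrow> (\<integral>z. g z \<partial>joint_meas P Q)"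
    using weak g_cont g_bdd unfolding weak_conv_seq_def by blast
  then show ?thesis unfolding as_cell[OF Qs_meas] as_cell[OF Q_meas] .
qed

text \<open>Absolute continuity with respect to a strictly positive density: sets whose p-mass
  vanishes also have vanishing f-mass, for every integrable f \<ge> 0.  Split f at the level
  k p: the part above it is small by dominated convergence, the part below is at most k times
  the p-mass.\<close>
lemma positive_density_abs_cont:
  fixes p f :: "'a::euclidean_space \<Rightarrow> real"
  assumes p_meas: "p \<in> borel_measurable borel" and p_pos: "\<And>x. p x > 0"
    and p_int: "integrable lborel p"
    and f_meas: "f \<in> borel_measurable borel" and f_nonneg: "\<And>x. 0 \<le> f x"
    and f_int: "integrable lborel f"
    and A: "\<And>n. A n \<in> sets borel"
    and p_mass: "(\<lambda>n. \<integral>x. indicator (A n) x * p x \<partial>lborel) \<longlonglongrightarrow> 0"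
  shows "(\<lambda>n. \<integral>x. indicator (A n) x * f x \<partial>lborel) \<longlonglongrightarrow> 0"
proof (rule LIMSEQ_I)
  fix e :: real assume e: "e > 0"
  define h where "h k x = indicator {x. f x > real k * p x} x * f x" for k :: nat and x
  have h_meas: "h k \<in> borel_measurable lborel" for k
    unfolding h_def using p_meas f_meas by measurable
  have h_dom: "\<And>k. AE x in lborel. norm (h k x) \<le> f x"
    using f_nonneg by (simp add: h_def indicator_def)
  have "(\<lambda>k. h k x) \<longlonglongrightarrow> 0" for x
  proof (rule tendsto_eventually)
    obtain N :: nat where N: "f x / p x < real N" using reals_Archimedean2 by blast
    have "h k x = 0" if "N \<le> k" for k
    proof -
      have "f x / p x < real k" using N that by (meson le_less_trans of_nat_le_iff not_less)
      then have "f x < real k * p x" using p_pos[of x] by (simp add: divide_less_eq)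
      then show ?thesis by (simp add: h_def)
    qed
    then show "\<forall>\<^sub>F k in sequentially. h k x = 0"
      unfolding eventually_sequentially by blast
  qed
  then have "AE x in lborel. (\<lambda>k. h k x) \<longlonglongrightarrow> 0" by simp
  note dominated = borel_measurable_const h_meas f_int this h_dom
  have "(\<lambda>k. \<integral>x. h k x \<partial>lborel) \<longlonglongrightarrow> 0"
    using integral_dominated_convergence[OF dominated] by simp
  from LIMSEQ_D[OF this, of "e/2"] e obtain k where k: "\<bar>\<integral>x. h k x \<partial>lborel\<bar> < e/2"
    by auto
  have "(\<lambda>n. real k * (\<integral>x. indicator (A n) x * p x \<partial>lborel)) \<longlonglongrightarrow> 0"
    using tendsto_mult_right_zero[OF p_mass] by simp
  from LIMSEQ_D[OF this, of "e/2"] e obtain N where N: "\<And>n. n \<ge> N \<Longrightarrow>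
      \<bar>real k * (\<integral>x. indicator (A n) x * p x \<partial>lborel)\<bar> < e/2"
    by auto
  show "\<exists>no. \<forall>n\<ge>no. norm ((\<integral>x. indicator (A n) x * f x \<partial>lborel) - 0) < e"
  proof (intro exI allI impI)
    fix n assume n: "n \<ge> N"
    have int_f: "integrable lborel (\<lambda>x. indicator (A n) x * f x)"
      using integrable_real_mult_indicator[of "A n" lborel f] A f_int by (simp add: mult.commute)
    have int_p: "integrable lborel (\<lambda>x. indicator (A n) x * p x)"
      using integrable_real_mult_indicator[of "A n" lborel p] A p_int by (simp add: mult.commute)
    have "(\<integral>x. indicator (A n) x * f x \<partial>lborel)
        \<le> (\<integral>x. h k x + real k * (indicator (A n) x * p x) \<partial>lborel)"
    proof (rule integral_mono[OF int_f])
      show "integrable lborel (\<lambda>x. h k x + real k * (indicator (A n) x * p x))"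
        using integrable_dominated_convergence2[OF dominated] int_p by simp
      show "indicator (A n) x * f x \<le> h k x + real k * (indicator (A n) x * p x)" for x
        using f_nonneg[of x] p_pos[of x] by (auto simp: h_def indicator_def)
    qed
    also have "\<dots> = (\<integral>x. h k x \<partial>lborel) + real k * (\<integral>x. indicator (A n) x * p x \<partial>lborel)"
      using integrable_dominated_convergence2[OF dominated] int_p by simp
    also have "\<dots> < e" using k N[OF n] by linarith
    finally have "(\<integral>x. indicator (A n) x * f x \<partial>lborel) < e" .
    moreover have "0 \<le> (\<integral>x. indicator (A n) x * f x \<partial>lborel)"
      using f_nonneg by (simp add: indicator_def)
    ultimately show "norm ((\<integral>x. indicator (A n) x * f x \<partial>lborel) - 0) < e" by simp
  qed
qed

lemma quantizer_cells_converge: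
  fixes P :: "'a::euclidean_space measure" and p f :: "'a \<Rightarrow> real"
    and Qs :: "nat \<Rightarrow> 'a \<Rightarrow> nat" and Q :: "'a \<Rightarrow> nat"
  assumes P_prob: "prob_space P"
    and p_meas: "p \<in> borel_measurable borel" and p_pos: "\<And>x. p x > 0"
    and P_dens: "P = density lborel (\<lambda>x. ennreal (p x))"
    and Qs_meas: "\<And>n. Qs n \<in> borel_measurable borel" and Q_meas: "Q \<in> borel_measurable borel"
    and weak: "weak_conv_seq (\<lambda>n. joint_meas P (Qs n)) (joint_meas P Q)"
    and f_meas: "f \<in> borel_measurable borel" and f_nonneg: "\<And>x. 0 \<le> f x"
    and f_int: "integrable lborel f"
  shows "(\<lambda>n. \<integral>x. indicator (Qs n -` {i} - Q -` {i}) x * f x \<partial>lborel) \<longlonglongrightarrow> 0"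
    and "(\<lambda>n. \<integral>x. indicator (Q -` {i} - Qs n -` {i}) x * f x \<partial>lborel) \<longlonglongrightarrow> 0"
proof -
  interpret P: prob_space P by fact
  have p_nonneg: "\<And>x. 0 \<le> p x" using p_pos less_imp_le by blast
  have p_int: "integrable lborel p"
    using prob_density_integral(1)[of p] P_prob P_dens p_meas p_nonneg by simp
  have sets_P: "sets P = sets borel" using P_dens by simp
  have cells: "Qs n -` {i} \<in> sets borel" "Q -` {i} \<in> sets borel" for n
    using measurable_sets[OF Qs_meas[of n], of "{i}"] measurable_sets[OF Q_meas, of "{i}"] by auto
  have "(\<lambda>n. \<integral>x. \<phi> x * indicator (Qs n -` {i}) x \<partial>P) \<longlonglongrightarrow> (\<integral>x. \<phi> x * indicator (Q -` {i}) x \<partial>P)"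
    if "continuous_on UNIV \<phi>" "\<And>x. \<phi> x \<in> {0..1}" for \<phi> :: "'a \<Rightarrow> real"
    using that by (intro joint_meas_weak_conv_cell[OF sets_P Qs_meas Q_meas weak])
                  (auto simp: bounded_iff intro!: exI[of _ 1])
  note sym_diff = weak_conv_sets_sym_diff[OF P.finite_measure_axioms sets_P cells this]
  have mass: "measure P A = (\<integral>x. indicator A x * p x \<partial>lborel)" if "A \<in> sets borel" for A
    using measure_density_lborel[of p A] P_prob P_dens p_meas p_nonneg that by simp
  show "(\<lambda>n. \<integral>x. indicator (Qs n -` {i} - Q -` {i}) x * f x \<partial>lborel) \<longlonglongrightarrow> 0"
    by (rule positive_density_abs_cont[OF p_meas p_pos p_int f_meas f_nonneg f_int])
       (use cells sym_diff(1) mass in auto)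
  show "(\<lambda>n. \<integral>x. indicator (Q -` {i} - Qs n -` {i}) x * f x \<partial>lborel) \<longlonglongrightarrow> 0"
    by (rule positive_density_abs_cont[OF p_meas p_pos p_int f_meas f_nonneg f_int])
       (use cells sym_diff(2) mass in auto)
qed


section \<open>Continuity of the cost\<close>

lemma continuous_section_measurable:
  fixes c :: "'a::topological_space \<Rightarrow> 'b::topological_space \<Rightarrow> real"
  assumes cont: "continuous_on (UNIV \<times> U) (\<lambda>(x, u). c x u)" and u: "u \<in> U"
  shows "(\<lambda>x. c x u) \<in> borel_measurable borel"
proof -
  have "continuous_on UNIV (\<lambda>x. (\<lambda>(x, u). c x u) (x, u))"
    by (rule continuous_on_compose2[OF cont continuous_on_Pair[OF continuous_on_id continuous_on_const]])
       (use u in auto)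
  then show ?thesis by (simp add: borel_measurable_continuous_onI)
qed

lemma INF_abs_diff_le:
  fixes a b :: "'u \<Rightarrow> real"
  assumes U: "U \<noteq> {}" and close: "\<And>u. u \<in> U \<Longrightarrow> \<bar>a u - b u\<bar> \<le> d"
    and bdd_a: "bdd_below (a ` U)" and bdd_b: "bdd_below (b ` U)"
  shows "\<bar>(INF u\<in>U. a u) - (INF u\<in>U. b u)\<bar> \<le> d"
proof -
  have "(INF u\<in>U. a u) - d \<le> (INF u\<in>U. b u)"
    using cINF_lower[OF bdd_a] close by (intro cINF_greatest[OF U]) (smt (verit))
  moreover have "(INF u\<in>U. b u) - d \<le> (INF u\<in>U. a u)"
    using cINF_lower[OF bdd_b] close by (intro cINF_greatest[OF U]) (smt (verit))
  ultimately show ?thesis by linarith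
qed

lemma cell_integrand_bound:
  fixes g f c K :: real
  assumes g: "0 \<le> g" and f: "0 \<le> f" and c: "\<bar>c\<bar> \<le> K"
  shows "\<bar>g * (indicator S x * c) - f * (indicator T x * c)\<bar>
           \<le> K * \<bar>g - f\<bar> + K * (indicator (S - T) x * f + indicator (T - S) x * f)"
proof -
  have K: "0 \<le> K" using c by linarith
  have gc: "\<bar>g * c\<bar> \<le> (\<bar>g - f\<bar> + f) * K"
    using mult_mono[OF _ c, of g "\<bar>g - f\<bar> + f"] g by (simp add: abs_mult)
  have fc: "\<bar>f * c\<bar> \<le> f * K" using mult_left_mono[OF c f] by (simp add: abs_mult abs_of_nonneg[OF f])
  have dc: "\<bar>(g - f) * c\<bar> \<le> \<bar>g - f\<bar> * K" using mult_left_mono[OF c] by (simp add: abs_mult)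
  show ?thesis
    using K gc fc dc mult_nonneg_nonneg[OF K abs_ge_zero[of "g - f"]]
    by (cases "x \<in> S"; cases "x \<in> T") (auto simp: algebra_simps)
qed

lemma cell_integral_bound:
  fixes g f c :: "'a::euclidean_space \<Rightarrow> real"
  assumes g_nonneg: "\<And>x. 0 \<le> g x" and g_int: "integrable lborel g"
    and f_nonneg: "\<And>x. 0 \<le> f x" and f_int: "integrable lborel f"
    and c_meas: "c \<in> borel_measurable borel" and c_bdd: "\<And>x. \<bar>c x\<bar> \<le> K"
    and S: "S \<in> sets borel" and T: "T \<in> sets borel"
  shows "\<bar>(\<integral>x. g x * (indicator S x * c x) \<partial>lborel) - (\<integral>x. f x * (indicator T x * c x) \<partial>lborel)\<bar>
     \<le> K * (\<integral>x. \<bar>g x - f x\<bar> \<partial>lborel)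
        + K * ((\<integral>x. indicator (S - T) x * f x \<partial>lborel) + (\<integral>x. indicator (T - S) x * f x \<partial>lborel))"
proof -
  have "0 \<le> K" using c_bdd[of undefined] by linarith
  then have cell_int: "integrable lborel (\<lambda>x. h x * (indicator A x * c x))"
    if "integrable lborel h" "A \<in> sets borel" for h A
    by (intro integrable_mult_bounded[where K = K])
       (use that c_meas c_bdd in \<open>auto simp: indicator_def abs_mult\<close>)
  have f_part: "integrable lborel (\<lambda>x. indicator A x * f x)" if "A \<in> sets borel" for A
    using integrable_real_mult_indicator[of A lborel f] that f_int by (simp add: mult.commute)
  note ints = cell_int[OF g_int S] cell_int[OF f_int T] f_part[of "S - T"] f_part[of "T - S"]
  have "\<bar>(\<integral>x. g x * (indicator S x * c x) \<partial>lborel) - (\<integral>x. f x * (indicator T x * c x) \<partial>lborel)\<bar>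
      = \<bar>\<integral>x. g x * (indicator S x * c x) - f x * (indicator T x * c x) \<partial>lborel\<bar>"
    using ints by simp
  also have "\<dots> \<le> (\<integral>x. \<bar>g x * (indicator S x * c x) - f x * (indicator T x * c x)\<bar> \<partial>lborel)"
    by (rule integral_abs_bound)
  also have "\<dots> \<le> (\<integral>x. K * \<bar>g x - f x\<bar>
                      + K * (indicator (S - T) x * f x + indicator (T - S) x * f x) \<partial>lborel)"
    by (rule integral_mono)
       (use ints S T g_int f_int cell_integrand_bound[OF g_nonneg f_nonneg c_bdd] in auto)
  also have "\<dots> = K * (\<integral>x. \<bar>g x - f x\<bar> \<partial>lborel)
        + K * ((\<integral>x. indicator (S - T) x * f x \<partial>lborel) + (\<integral>x. indicator (T - S) x * f x \<partial>lborel))"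
    using ints S T g_int f_int by auto
  finally show ?thesis .
qed

lemma cell_cost_convergence:
  fixes fs :: "nat \<Rightarrow> 'a::euclidean_space \<Rightarrow> real" and f :: "'a \<Rightarrow> real"
    and c0 :: "'a \<Rightarrow> 'b \<Rightarrow> real"
  assumes fs_meas: "\<And>n. fs n \<in> borel_measurable borel" and fs_nonneg: "\<And>n x. 0 \<le> fs n x"
    and fs_int: "\<And>n. integrable lborel (fs n)"
    and f_meas: "f \<in> borel_measurable borel" and f_nonneg: "\<And>x. 0 \<le> f x"
    and f_int: "integrable lborel f"
    and L1: "(\<lambda>n. \<integral>x. \<bar>fs n x - f x\<bar> \<partial>lborel) \<longlonglongrightarrow> 0"
    and Bs: "\<And>n. Bs n \<in> sets borel" and B: "B \<in> sets borel"
    and Bs_B: "(\<lambda>n. \<integral>x. indicator (Bs n - B) x * f x \<partial>lborel) \<longlonglongrightarrow> 0"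
    and B_Bs: "(\<lambda>n. \<integral>x. indicator (B - Bs n) x * f x \<partial>lborel) \<longlonglongrightarrow> 0"
    and c_meas: "\<And>u. u \<in> U \<Longrightarrow> (\<lambda>x. c0 x u) \<in> borel_measurable borel"
    and c_nonneg: "\<And>x u. u \<in> U \<Longrightarrow> 0 \<le> c0 x u"
    and c_bdd: "\<And>x u. u \<in> U \<Longrightarrow> \<bar>c0 x u\<bar> \<le> K"
  shows "(\<lambda>n. INF u\<in>U. LINT x:Bs n|density lborel (\<lambda>x. ennreal (fs n x)). c0 x u)
           \<longlonglongrightarrow> (INF u\<in>U. LINT x:B|density lborel (\<lambda>x. ennreal (f x)). c0 x u)"
proof (cases "U = {}")
  case False
  define a where "a n u = (\<integral>x. fs n x * (indicator (Bs n) x * c0 x u) \<partial>lborel)" for n u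
  define a0 where "a0 u = (\<integral>x. f x * (indicator B x * c0 x u) \<partial>lborel)" for u
  define \<delta> where "\<delta> n = K * (\<integral>x. \<bar>fs n x - f x\<bar> \<partial>lborel)
      + K * ((\<integral>x. indicator (Bs n - B) x * f x \<partial>lborel) + (\<integral>x. indicator (B - Bs n) x * f x \<partial>lborel))"
    for n
  have "(\<lambda>n. \<delta> n) \<longlonglongrightarrow> K * 0 + K * (0 + 0)"
    unfolding \<delta>_def by (intro tendsto_intros L1 Bs_B B_Bs)
  then have \<delta>_lim: "\<delta> \<longlonglongrightarrow> 0" by simp
  have nonneg: "0 \<le> a n u" "0 \<le> a0 u" if u: "u \<in> U" for n u
  proof -
    have integrand: "0 \<le> h * (indicator A x * c0 x u)" if "0 \<le> h" for h :: real and A x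
      using that c_nonneg[OF u] by (simp add: indicator_def)
    show "0 \<le> a n u" "0 \<le> a0 u"
      unfolding a_def a0_def by (intro integral_nonneg_AE AE_I2 integrand fs_nonneg f_nonneg)+
  qed
  have INF_close: "\<bar>(INF u\<in>U. a n u) - (INF u\<in>U. a0 u)\<bar> \<le> \<delta> n" for n
  proof (rule INF_abs_diff_le[OF False])
    show "\<bar>a n u - a0 u\<bar> \<le> \<delta> n" if "u \<in> U" for u
      unfolding a_def a0_def \<delta>_def
      by (rule cell_integral_bound[OF fs_nonneg fs_int f_nonneg f_int
            c_meas[OF that] c_bdd[OF that] Bs B])
    show "bdd_below ((a n) ` U)" "bdd_below (a0 ` U)"
      using nonneg by (auto intro: bdd_belowI2[where m = 0])
  qed
  have "(\<lambda>n. INF u\<in>U. a n u) \<longlonglongrightarrow> (INF u\<in>U. a0 u)"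
    by (rule LIM_zero_cancel, rule Lim_null_comparison[OF always_eventually \<delta>_lim])
       (use INF_close in simp)
  moreover have "(INF u\<in>U. LINT x:Bs n|density lborel (\<lambda>x. ennreal (fs n x)). c0 x u) = (INF u\<in>U. a n u)"
    for n unfolding a_def
    by (intro INF_cong refl set_integral_density_lborel[OF fs_meas fs_nonneg c_meas Bs])
  moreover have "(INF u\<in>U. LINT x:B|density lborel (\<lambda>x. ennreal (f x)). c0 x u) = (INF u\<in>U. a0 u)"
    unfolding a0_def
    by (intro INF_cong refl set_integral_density_lborel[OF f_meas f_nonneg c_meas B])
  ultimately show ?thesis by simp
qed simp

theorem lemma4:
  fixes C C1 :: real and M :: nat
    and U :: "'b::euclidean_space set"
    and c0 :: "'a::euclidean_space \<Rightarrow> 'b \<Rightarrow> real"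
    and P :: "'a measure" and p :: "'a \<Rightarrow> real"
  assumes C_pos: "C > 0" and C1_pos: "C1 > 0"
    and U_compact: "compact U"
    and c0_cont: "continuous_on (UNIV \<times> U) (\<lambda>(x, u). c0 x u)"
    and c0_nonneg: "\<And>x u. u \<in> U \<Longrightarrow> 0 \<le> c0 x u"
    and c0_bdd: "bounded ((\<lambda>(x, u). c0 x u) ` (UNIV \<times> U))"
    and P_prob: "prob_space P"
    and p_meas: "p \<in> borel_measurable borel" and p_pos: "\<And>x. p x > 0"
    and P_dens: "P = density lborel (\<lambda>x. ennreal (p x))"
  shows "\<forall>\<pi>s \<pi> Qs Q.
           (\<forall>n. \<pi>s n \<in> S_class C C1) \<and> \<pi> \<in> S_class C C1 \<and>
           (\<forall>n. Qs n \<in> Qc M) \<and> Q \<in> Qc M \<and>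
           weak_conv_seq \<pi>s \<pi> \<and>
           weak_conv_seq (\<lambda>n. joint_meas P (Qs n)) (joint_meas P Q)
           \<longrightarrow> (\<lambda>n. cost c0 U M (\<pi>s n) (Qs n)) \<longlonglongrightarrow> cost c0 U M \<pi> Q"
proof (intro allI impI, elim conjE)
  fix \<pi>s :: "nat \<Rightarrow> 'a measure" and \<pi> :: "'a measure" and Qs :: "nat \<Rightarrow> 'a \<Rightarrow> nat" and Q :: "'a \<Rightarrow> nat"
  assume \<pi>s_S: "\<forall>n. \<pi>s n \<in> S_class C C1" and \<pi>_S: "\<pi> \<in> S_class C C1"
    and Qs_c: "\<forall>n. Qs n \<in> Qc M" and Q_c: "Q \<in> Qc M" and weak_\<pi>: "weak_conv_seq \<pi>s \<pi>"
    and weak_Q: "weak_conv_seq (\<lambda>n. joint_meas P (Qs n)) (joint_meas P Q)"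
  obtain fs where fs: "\<And>n. admissible_density C C1 (fs n)"
    and \<pi>s_eq: "\<pi>s = (\<lambda>n. density lborel (\<lambda>x. ennreal (fs n x)))"
    using S_class_densities[OF \<pi>s_S] by blast
  obtain f where f: "admissible_density C C1 f" and \<pi>_eq: "\<pi> = density lborel (\<lambda>x. ennreal (f x))"
    using \<pi>_S S_class_density by blast
  have L1: "(\<lambda>n. \<integral>x. \<bar>fs n x - f x\<bar> \<partial>lborel) \<longlonglongrightarrow> 0"
    using admissible_densities_weak_conv_L1[OF fs f C1_pos] weak_\<pi> by (simp add: \<pi>s_eq \<pi>_eq)
  have Qs_meas: "\<And>n. Qs n \<in> borel_measurable borel" and Q_meas: "Q \<in> borel_measurable borel"
    using Qs_c Q_c by (auto simp: Qc_def)
  obtain K where K: "\<And>x u. u \<in> U \<Longrightarrow> \<bar>c0 x u\<bar> \<le> K"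
    using c0_bdd unfolding bounded_iff by force
  have fs_meas: "\<And>n. fs n \<in> borel_measurable borel" and fs_nonneg: "\<And>n x. 0 \<le> fs n x"
    and fs_int: "\<And>n. integrable lborel (fs n)"
    using admissible_densityD[OF fs] by blast+
  have cell_sets: "Qs n -` {i} \<in> sets borel" "Q -` {i} \<in> sets borel" for n i
    using measurable_sets[OF Qs_meas[of n], of "{i}"] measurable_sets[OF Q_meas, of "{i}"] by auto
  note cells = quantizer_cells_converge[OF P_prob p_meas p_pos P_dens Qs_meas Q_meas weak_Q
                 admissible_densityD[OF f]]
  have "(\<lambda>n. INF u\<in>U. LINT x:(Qs n -` {i})|\<pi>s n. c0 x u) \<longlonglongrightarrow> (INF u\<in>U. LINT x:(Q -` {i})|\<pi>. c0 x u)"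
    for i unfolding \<pi>s_eq \<pi>_eq
    by (rule cell_cost_convergence[OF fs_meas fs_nonneg fs_int admissible_densityD[OF f] L1
          cell_sets cells continuous_section_measurable[OF c0_cont] c0_nonneg K])
  then show "(\<lambda>n. cost c0 U M (\<pi>s n) (Qs n)) \<longlonglongrightarrow> cost c0 U M \<pi> Q"
    unfolding cost_def by (intro tendsto_sum)
qed

end
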